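(* The category of cubes $\widehat{\square}$ (the maximal category of cubes, containing all adjacency-preserving maps) is shell-complete.
   Context: $[0]=\{()\}$, $[n]=\{0,1\}^n$ ($n\ge1$) with the product order. A map $f:[m]\to[n]$ is adjacency-preserving if it is strictly increasing and for $x,y\in[m]$ at Hamming distance $1$, $f(x),f(y)$ are at Hamming distance $1$. $\widehat\square$ is the category with objects $[n]$, $n\ge0$, and all adjacency-preserving maps. For a category $\mathcal A$ of this kind (with objects $[n]$), an $\mathcal A$-set is a presheaf on $\mathcal A$, $\mathcal A[p]=\mathcal A(-,[p])$, $K_{\le1}$ is truncation to the full subcategory on $[0],[1]$, and $\mathrm{cosk}_1^{\mathcal A}$ is the right adjoint to this truncation. $\mathcal A$ is shell-complete if for every $p\ge2$ the canonical map $\mathcal A[p]\to\mathrm{cosk}_1^{\mathcal A}(\mathcal A[p]_{\le1})$ (adjoint to the identity of $\mathcal A[p]_{\le1}$) is an isomorphism. *)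

theory Defs
  imports "HOL-Library.FuncSet"
begin

text \<open>The object [n] is represented by the set of boolean lists of length n
  (so [0] = {[]}), with the componentwise (product) order, False < True.\<close>

definition cube :: "nat \<Rightarrow> bool list set" where
  "cube n = {xs. length xs = n}"

definition cle :: "bool list \<Rightarrow> bool list \<Rightarrow> bool" where
  "cle xs ys \<longleftrightarrow> length xs = length ys \<and> (\<forall>i<length xs. xs ! i \<le> ys ! i)"

definition cless :: "bool list \<Rightarrow> bool list \<Rightarrow> bool" where
  "cless xs ys \<longleftrightarrow> cle xs ys \<and> xs \<noteq> ys"

definition hdist :: "bool list \<Rightarrow> bool list \<Rightarrow> nat" where
  "hdist xs ys = card {i. i < length xs \<and> xs ! i \<noteq> ys ! i}"

definition adj_pres :: "nat \<Rightarrow> (bool list \<Rightarrow> bool list) \<Rightarrow> bool" where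
  "adj_pres m f \<longleftrightarrow>
     (\<forall>x\<in>cube m. \<forall>y\<in>cube m. cless x y \<longrightarrow> cless (f x) (f y)) \<and>
     (\<forall>x\<in>cube m. \<forall>y\<in>cube m. hdist x y = 1 \<longrightarrow> hdist (f x) (f y) = 1)"

definition cube_hom :: "nat \<Rightarrow> nat \<Rightarrow> (bool list \<Rightarrow> bool list) set" where
  "cube_hom m n = {f \<in> cube m \<rightarrow>\<^sub>E cube n. adj_pres m f}"

definition ccomp :: "nat \<Rightarrow> (bool list \<Rightarrow> bool list) \<Rightarrow> (bool list \<Rightarrow> bool list)
    \<Rightarrow> (bool list \<Rightarrow> bool list)" where
  "ccomp k g f = compose (cube k) g f"

type_synonym cmor = "bool list \<Rightarrow> bool list"

text \<open>A category \<A> of this kind is given by its hom-sets \<open>hom m n\<close> (objects [n], n \<ge> 0,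
  composition = composition of functions).

  A 1-truncated \<A>-set Y (presheaf on the full subcategory on [0],[1]) is given by
  sets \<open>Yset k\<close> (k \<le> 1) and actions \<open>Yact k l \<phi> : Yset l \<rightarrow> Yset k\<close> for \<open>\<phi> \<in> hom k l\<close>.

  The value of the 1-coskeleton at [n] is the set of morphisms of truncated presheaves
  \<open>\<A>[n]_{\<le>1} \<rightarrow> Y\<close>, i.e. families \<alpha>_k : hom k n \<rightarrow> Yset k (k \<le> 1) that are natural.\<close>
definition cosk1 :: "(nat \<Rightarrow> nat \<Rightarrow> cmor set) \<Rightarrow> (nat \<Rightarrow> 'a set)
    \<Rightarrow> (nat \<Rightarrow> nat \<Rightarrow> cmor \<Rightarrow> 'a \<Rightarrow> 'a) \<Rightarrow> nat \<Rightarrow> (nat \<Rightarrow> cmor \<Rightarrow> 'a) set" where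
  "cosk1 hom Yset Yact n =
     {\<alpha>. (\<forall>k\<le>1. \<alpha> k \<in> hom k n \<rightarrow>\<^sub>E Yset k) \<and>
          (\<forall>k>1. \<alpha> k = (\<lambda>_. undefined)) \<and>
          (\<forall>k\<le>1. \<forall>l\<le>1. \<forall>\<phi>\<in>hom k l. \<forall>u\<in>hom l n.
              \<alpha> k (ccomp k u \<phi>) = Yact k l \<phi> (\<alpha> l u))}"

definition rep_set :: "(nat \<Rightarrow> nat \<Rightarrow> cmor set) \<Rightarrow> nat \<Rightarrow> nat \<Rightarrow> cmor set" where
  "rep_set hom p k = hom k p"

definition rep_act :: "nat \<Rightarrow> nat \<Rightarrow> nat \<Rightarrow> cmor \<Rightarrow> cmor \<Rightarrow> cmor" where
  "rep_act p k l \<phi> v = ccomp k v \<phi>"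

text \<open>Component at [n] of the canonical map \<A>[p] \<rightarrow> cosk_1(\<A>[p]_{\<le>1}) (the unit of the
  truncation/coskeleton adjunction): f \<mapsto> (u \<mapsto> f \<circ> u) for u \<in> hom k n, k \<le> 1.\<close>
definition canon :: "(nat \<Rightarrow> nat \<Rightarrow> cmor set) \<Rightarrow> nat \<Rightarrow> cmor \<Rightarrow> (nat \<Rightarrow> cmor \<Rightarrow> cmor)" where
  "canon hom n f = (\<lambda>k. if k \<le> 1 then (\<lambda>u\<in>hom k n. ccomp k f u) else (\<lambda>_. undefined))"

text \<open>Shell-completeness: for every p \<ge> 2 the canonical map is an isomorphism of \<A>-sets,
  i.e. each of its components (at every object [n]) is a bijection.\<close>
definition shell_complete :: "(nat \<Rightarrow> nat \<Rightarrow> cmor set) \<Rightarrow> bool" where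
  "shell_complete hom \<longleftrightarrow>
     (\<forall>p\<ge>2. \<forall>n. bij_betw (canon hom n) (hom n p)
                   (cosk1 hom (rep_set hom p) (rep_act p) n))"

end

theory Submission
  imports Defs
begin

text \<open>A compatible family \<alpha> in the 1-coskeleton is determined by its vertex map
  x \<mapsto> \<alpha> 0 x, since naturality along the points of [0] and [1] gives \<alpha> k u z = \<alpha> 0 (u z).
  Naturality along the edges [1] \<rightarrow> [n] shows that the vertex map sends every edge
  x < y of [n] to an edge of [p]. A map of cubes with this property is monotone
  (walk from x to y \<ge> x along edges) and hence strictly increasing, i.e. it is
  adjacency-preserving, and its image under the canonical map is \<alpha>.\<close>

lemma cube_0_eq: "cube 0 = {[]}"
  by (auto simp: cube_def)

lemma cube_1_eq: "cube (Suc 0) = {[False], [True]}"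
  by (auto simp: cube_def length_Suc_conv)

lemma cle_refl: "cle x x"
  by (simp add: cle_def)

lemma cle_trans: "cle x y \<Longrightarrow> cle y z \<Longrightarrow> cle x z"
  unfolding cle_def by (metis order_trans)

lemma cle_antisym: "cle x y \<Longrightarrow> cle y x \<Longrightarrow> x = y"
  unfolding cle_def by (metis antisym nth_equalityI)

lemma cless_asym: "cless x y \<Longrightarrow> \<not> cless y x"
  unfolding cless_def using cle_antisym by blast

lemma hdist_sym: "length x = length y \<Longrightarrow> hdist x y = hdist y x"
  unfolding hdist_def by metis

lemma cless_False_True: "cless [False] [True]"
  by (simp add: cless_def cle_def)

lemma hdist_False_True: "hdist [False] [True] = 1"
proof -
  have "{i. i < length [False] \<and> [False] ! i \<noteq> [True] ! i} = {0}" by auto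
  thus ?thesis by (simp add: hdist_def)
qed

text \<open>Flipping one coordinate on which x and y differ moves x one edge closer to y.\<close>
lemma cle_edge_step:
  assumes "cle x y" "x \<noteq> y"
  obtains z where "cless x z" "hdist x z = 1" "cle z y" "hdist z y < hdist x y"
    "length z = length x"
proof -
  have len: "length x = length y" using assms by (simp add: cle_def)
  obtain i where i: "i < length x" "x ! i \<noteq> y ! i"
    using assms len nth_equalityI by blast
  have xi: "x ! i = False" "y ! i = True"
    using i assms(1) unfolding cle_def by auto
  define z where "z = x[i := True]"
  have lz: "length z = length x" by (simp add: z_def)
  have diff_xz: "{j. j < length x \<and> x ! j \<noteq> z ! j} = {i}"
    using i xi by (auto simp: z_def nth_list_update)
  have diff_zy: "{j. j < length z \<and> z ! j \<noteq> y ! j} = {j. j < length x \<and> x ! j \<noteq> y ! j} - {i}"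
    using i xi by (auto simp: z_def nth_list_update)
  have "hdist z y < hdist x y"
    unfolding hdist_def diff_zy using i by (intro psubset_card_mono) auto
  moreover have "hdist x z = 1" unfolding hdist_def diff_xz by simp
  moreover have "cle x z" using lz i unfolding cle_def z_def by (auto simp: nth_list_update)
  moreover have "x \<noteq> z" using xi i by (metis nth_list_update_eq z_def)
  moreover have "cle z y" unfolding cle_def
  proof (intro conjI allI impI)
    fix j assume "j < length z"
    thus "z ! j \<le> y ! j" using assms(1) xi len lz unfolding cle_def z_def
      by (cases "j = i") auto
  qed (use lz len in simp)
  ultimately show ?thesis using that lz by (auto simp: cless_def)
qed

lemma hdist_1_imp_cless:
  assumes "length x = length y" "hdist x y = 1"
  shows "cless x y \<or> cless y x"
proof -
  obtain i where diff: "{j. j < length x \<and> x ! j \<noteq> y ! j} = {i}"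
    using assms(2) unfolding hdist_def by (meson card_1_singletonE)
  hence i: "i < length x" "x ! i \<noteq> y ! i" by auto
  have same: "\<And>j. j < length x \<Longrightarrow> j \<noteq> i \<Longrightarrow> x ! j = y ! j" using diff by auto
  have "x \<noteq> y" using i by auto
  moreover have "cle y x" if "x ! i"
    using that assms(1) same unfolding cle_def by (metis le_boolD le_boolI nat_neq_iff)
  moreover have "cle x y" if "\<not> x ! i"
    using that i assms(1) same unfolding cle_def by (metis le_boolI)
  ultimately show ?thesis by (auto simp: cless_def)
qed

definition preserves_edges :: "nat \<Rightarrow> cmor \<Rightarrow> bool" where
  "preserves_edges n g \<longleftrightarrow>
     (\<forall>x\<in>cube n. \<forall>y\<in>cube n. cless x y \<and> hdist x y = 1 \<longrightarrow>
        cless (g x) (g y) \<and> hdist (g x) (g y) = 1)"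

lemma preserves_edges_imp_mono:
  assumes g: "preserves_edges n g"
  shows "x \<in> cube n \<Longrightarrow> y \<in> cube n \<Longrightarrow> cle x y \<Longrightarrow> cle (g x) (g y)"
proof (induction "hdist x y" arbitrary: x rule: less_induct)
  case less
  show ?case
  proof (cases "x = y")
    case True
    thus ?thesis by (simp add: cle_refl)
  next
    case False
    then obtain z where z: "cless x z" "hdist x z = 1" "cle z y" "hdist z y < hdist x y"
        "length z = length x"
      using cle_edge_step[OF less.prems(3)] by blast
    have "z \<in> cube n" using z(5) less.prems(1) by (simp add: cube_def)
    hence "cle (g x) (g z)" "cle (g z) (g y)"
      using g less z unfolding preserves_edges_def cless_def by blast+
    thus ?thesis by (rule cle_trans)
  qed
qed

lemma preserves_edges_imp_adj_pres:
  assumes g: "preserves_edges n g" and g_cube: "g \<in> cube n \<rightarrow> cube p"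
  shows "adj_pres n g"
proof -
  have strict: "cless (g x) (g y)" if x: "x \<in> cube n" and y: "y \<in> cube n" and "cless x y" for x y
  proof -
    obtain z where z: "cless x z" "hdist x z = 1" "cle z y" "length z = length x"
      using cle_edge_step \<open>cless x y\<close> unfolding cless_def by metis
    have zc: "z \<in> cube n" using z(4) x by (simp add: cube_def)
    have xz: "cless (g x) (g z)" using g x zc z unfolding preserves_edges_def by blast
    have zy: "cle (g z) (g y)" using preserves_edges_imp_mono[OF g zc y z(3)] .
    have "g x \<noteq> g y" using xz zy unfolding cless_def by (metis cle_antisym)
    thus ?thesis using xz zy cle_trans unfolding cless_def by blast
  qed
  have hdist_1: "hdist (g x) (g y) = 1"
    if x: "x \<in> cube n" and y: "y \<in> cube n" and "hdist x y = 1" for x y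
  proof -
    have lxy: "length x = length y" using x y by (simp add: cube_def)
    have "g x \<in> cube p" "g y \<in> cube p" using g_cube x y by auto
    hence lg: "length (g x) = length (g y)" by (simp add: cube_def)
    show ?thesis
      using hdist_1_imp_cless[OF lxy \<open>hdist x y = 1\<close>] g x y \<open>hdist x y = 1\<close>
        hdist_sym[OF lxy] hdist_sym[OF lg]
      unfolding preserves_edges_def by metis
  qed
  show ?thesis unfolding adj_pres_def using strict hdist_1 by blast
qed

definition cube_point :: "bool list \<Rightarrow> cmor" where
  "cube_point x = (\<lambda>_\<in>cube 0. x)"

definition cube_edge :: "bool list \<Rightarrow> bool list \<Rightarrow> cmor" where
  "cube_edge x y = (\<lambda>z\<in>cube 1. if z = [True] then y else x)"

lemma ccomp_in_cube_hom:
  assumes u: "u \<in> cube_hom k n" and f: "f \<in> cube_hom n p"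
  shows "ccomp k f u \<in> cube_hom k p"
proof -
  have "ccomp k f u \<in> cube k \<rightarrow>\<^sub>E cube p"
    using u f by (auto simp: cube_hom_def ccomp_def compose_def)
  moreover have "adj_pres k (ccomp k f u)"
    using u f unfolding cube_hom_def adj_pres_def ccomp_def compose_def by (auto simp: PiE_iff)
  ultimately show ?thesis by (simp add: cube_hom_def)
qed

lemma cube_point_in_cube_hom: "x \<in> cube n \<Longrightarrow> cube_point x \<in> cube_hom 0 n"
  by (auto simp: cube_hom_def cube_point_def adj_pres_def cube_0_eq cless_def hdist_def)

lemma cube_point_apply: "cube_point x [] = x"
  by (simp add: cube_point_def cube_0_eq)

lemma ccomp_cube_point: "ccomp 0 u (cube_point z) = cube_point (u z)"
  by (auto simp: ccomp_def compose_def cube_point_def cube_0_eq)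

lemma cube_edge_in_cube_hom:
  assumes "x \<in> cube n" "y \<in> cube n" "cless x y" "hdist x y = 1"
  shows "cube_edge x y \<in> cube_hom 1 n"
proof -
  have "length x = length y" using assms by (simp add: cube_def)
  hence "hdist y x = 1" using assms hdist_sym by simp
  moreover have "\<not> cless y x" "\<not> cle [True] [False]"
    using assms cless_asym by (auto simp: cle_def)
  ultimately show ?thesis
    using assms unfolding cube_hom_def adj_pres_def
    by (auto simp: cube_edge_def cube_1_eq cless_def hdist_def)
qed

abbreviation cosk1_rep :: "nat \<Rightarrow> nat \<Rightarrow> (nat \<Rightarrow> cmor \<Rightarrow> cmor) set" where
  "cosk1_rep p n \<equiv> cosk1 cube_hom (rep_set cube_hom p) (rep_act p) n"

lemma cosk1_rep_iff:
  "\<alpha> \<in> cosk1_rep p n \<longleftrightarrow>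
     (\<forall>k\<le>1. \<alpha> k \<in> cube_hom k n \<rightarrow>\<^sub>E cube_hom k p) \<and>
     (\<forall>k>1. \<alpha> k = (\<lambda>_. undefined)) \<and>
     (\<forall>k\<le>1. \<forall>l\<le>1. \<forall>\<phi>\<in>cube_hom k l. \<forall>u\<in>cube_hom l n.
        \<alpha> k (ccomp k u \<phi>) = ccomp k (\<alpha> l u) \<phi>)"
  by (simp add: cosk1_def rep_set_def rep_act_def)

lemma canon_in_cosk1_rep:
  assumes f: "f \<in> cube_hom n p"
  shows "canon cube_hom n f \<in> cosk1_rep p n"
  unfolding cosk1_rep_iff
proof (intro conjI allI impI ballI)
  fix k :: nat assume "k \<le> 1"
  thus "canon cube_hom n f k \<in> cube_hom k n \<rightarrow>\<^sub>E cube_hom k p"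
    using ccomp_in_cube_hom[OF _ f] by (auto simp: canon_def)
next
  fix k :: nat assume "1 < k"
  thus "canon cube_hom n f k = (\<lambda>_. undefined)" by (simp add: canon_def)
next
  fix k l :: nat and \<phi> u
  assume kl: "k \<le> 1" "l \<le> 1" and \<phi>: "\<phi> \<in> cube_hom k l" and u: "u \<in> cube_hom l n"
  have "ccomp k u \<phi> \<in> cube_hom k n" by (rule ccomp_in_cube_hom[OF \<phi> u])
  moreover have "\<phi> z \<in> cube l" if "z \<in> cube k" for z using \<phi> that by (auto simp: cube_hom_def)
  ultimately show "canon cube_hom n f k (ccomp k u \<phi>) = ccomp k (canon cube_hom n f l u) \<phi>"
    using kl u by (auto simp: canon_def ccomp_def compose_def)
qed

lemma inj_on_canon: "inj_on (canon cube_hom n) (cube_hom n p)"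
proof (rule inj_onI)
  fix f g assume f: "f \<in> cube_hom n p" and g: "g \<in> cube_hom n p"
    and eq: "canon cube_hom n f = canon cube_hom n g"
  show "f = g"
  proof (rule extensionalityI)
    show "f \<in> extensional (cube n)" "g \<in> extensional (cube n)"
      using f g by (auto simp: cube_hom_def PiE_def)
  next
    fix x assume x: "x \<in> cube n"
    have "canon cube_hom n f 0 (cube_point x) [] = canon cube_hom n g 0 (cube_point x) []"
      using eq by simp
    thus "f x = g x"
      using cube_point_in_cube_hom[OF x]
      by (simp add: canon_def ccomp_def compose_def cube_point_def cube_0_eq)
  qed
qed

definition vertex_map :: "nat \<Rightarrow> (nat \<Rightarrow> cmor \<Rightarrow> cmor) \<Rightarrow> cmor" where
  "vertex_map n \<alpha> = (\<lambda>x\<in>cube n. \<alpha> 0 (cube_point x) [])"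

lemma cosk1_rep_apply_eq_vertex_map:
  assumes \<alpha>: "\<alpha> \<in> cosk1_rep p n"
    and k: "k \<le> 1" and u: "u \<in> cube_hom k n" and z: "z \<in> cube k"
  shows "\<alpha> k u z = vertex_map n \<alpha> (u z)"
proof -
  have "\<alpha> 0 (ccomp 0 u (cube_point z)) = ccomp 0 (\<alpha> k u) (cube_point z)"
    using \<alpha> k u cube_point_in_cube_hom[OF z] unfolding cosk1_rep_iff by blast
  hence "\<alpha> 0 (cube_point (u z)) [] = \<alpha> k u z"
    by (simp add: ccomp_cube_point cube_point_apply)
  moreover have "u z \<in> cube n" using u z by (auto simp: cube_hom_def)
  ultimately show ?thesis by (simp add: vertex_map_def)
qed

lemma vertex_map_in_cube_hom:
  assumes \<alpha>: "\<alpha> \<in> cosk1_rep p n"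
  shows "vertex_map n \<alpha> \<in> cube_hom n p"
proof -
  let ?g = "vertex_map n \<alpha>"
  have hom: "\<alpha> k u \<in> cube_hom k p" if "k \<le> 1" "u \<in> cube_hom k n" for k u
    using \<alpha> that unfolding cosk1_rep_iff by auto
  have g_cube: "?g \<in> cube n \<rightarrow>\<^sub>E cube p"
    using hom[OF _ cube_point_in_cube_hom]
    by (auto simp: vertex_map_def cube_hom_def cube_0_eq)
  have "preserves_edges n ?g"
    unfolding preserves_edges_def
  proof (intro ballI impI)
    fix x y assume xy: "x \<in> cube n" "y \<in> cube n" and "cless x y \<and> hdist x y = 1"
    hence e: "cube_edge x y \<in> cube_hom 1 n" using cube_edge_in_cube_hom by blast
    hence "adj_pres 1 (\<alpha> 1 (cube_edge x y))" using hom[of 1] by (simp add: cube_hom_def)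
    moreover have "?g x = \<alpha> 1 (cube_edge x y) [False]" "?g y = \<alpha> 1 (cube_edge x y) [True]"
      using cosk1_rep_apply_eq_vertex_map[OF \<alpha> _ e] by (simp_all add: cube_edge_def cube_1_eq)
    ultimately show "cless (?g x) (?g y) \<and> hdist (?g x) (?g y) = 1"
      using cless_False_True hdist_False_True unfolding adj_pres_def by (auto simp: cube_1_eq)
  qed
  hence "adj_pres n ?g"
    using g_cube by (intro preserves_edges_imp_adj_pres[where p = p]) auto
  thus ?thesis using g_cube by (simp add: cube_hom_def)
qed

lemma canon_vertex_map:
  assumes \<alpha>: "\<alpha> \<in> cosk1_rep p n"
  shows "canon cube_hom n (vertex_map n \<alpha>) = \<alpha>"
proof (intro ext)
  fix k u z
  have \<alpha>k: "\<alpha> k \<in> cube_hom k n \<rightarrow>\<^sub>E cube_hom k p" if "k \<le> 1"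
    using \<alpha> that unfolding cosk1_rep_iff by auto
  show "canon cube_hom n (vertex_map n \<alpha>) k u z = \<alpha> k u z"
  proof (cases "k \<le> 1 \<and> u \<in> cube_hom k n")
    case True
    hence "\<alpha> k u \<in> extensional (cube k)" using \<alpha>k by (auto simp: cube_hom_def PiE_def)
    thus ?thesis
      using True cosk1_rep_apply_eq_vertex_map[OF \<alpha>, of k u z]
      by (auto simp: canon_def ccomp_def compose_def extensional_def)
  next
    case False
    thus ?thesis using \<alpha>k \<alpha> unfolding cosk1_rep_iff
      by (auto simp: canon_def PiE_def extensional_def)
  qed
qed

text \<open>The canonical map is bijective for every p, not only for p \<ge> 2.\<close>
lemma bij_betw_canon: "bij_betw (canon cube_hom n) (cube_hom n p) (cosk1_rep p n)"
proof -
  have "canon cube_hom n ` cube_hom n p = cosk1_rep p n"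
    using canon_in_cosk1_rep vertex_map_in_cube_hom canon_vertex_map
    by (metis (no_types, lifting) image_eqI image_subsetI subsetI subset_antisym)
  thus ?thesis using inj_on_canon by (simp add: bij_betw_def)
qed

theorem theorem7p5:
  shows "shell_complete cube_hom"
  unfolding shell_complete_def using bij_betw_canon by blast

end
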